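(* Let $H\Gamma=(C,\{\mathcal W,\mathcal X,\mathcal Y,\mathcal Z\},G_{zx},G_{wy})$ be a Lagrangian hypercube diagram, let $i:T=S^1\times S^1\to\mathbb{R}^4$ be the immersed Lagrangian torus it determines, and let $L\subset(\mathbb{R}^5,\xi)$ be the embedded Legendrian torus obtained as the lift of $i$, with $H_1(L)=\langle\tilde\gamma_{zx},\tilde\gamma_{wy}\rangle$. Then, under the identification $[L,U(2)]\cong\pi_1(U(2))\times\pi_1(U(2))\cong\mathbb{Z}\times\mathbb{Z}$ given by restricting to $\tilde\gamma_{zx}$ and $\tilde\gamma_{wy}$, the rotation class of $L$ is $$r(L)=(w(G_{zx}),w(G_{wy})),$$ where for a grid diagram $G$, $w(G)=\frac14\big(\#(\text{counterclockwise oriented corners of }G)-\#(\text{clockwise oriented corners of }G)\big)$ is the winding number of the immersed curve determined by $G$.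
   Context: Grid conventions. In a plane with coordinates $(a,b)$ (below $(a,b)=(w,y)$ or $(a,b)=(z,x)$), an immersed grid diagram of size $n$ is an $n\times n$ grid of unit cells in $[0,n]^2$ with two kinds of markings at centers of cells, each row and each column containing exactly one marking of each kind; joining each marking of the first kind to the marking of the second kind in its row by an $a$-parallel segment, and each marking of the second kind to the marking of the first kind in its column by a $b$-parallel segment, gives an oriented connected closed piecewise-linear curve, with no crossing information recorded, viewed as an immersion $\gamma:\mathbb{R}/2\pi\mathbb{Z}\to\mathbb{R}^2$, $\theta\mapsto(a(\theta),b(\theta))$. It is a Lagrangian grid diagram if (1) $\int_0^{2\pi}b(\theta)a'(\theta)\,d\theta=0$ and (2) $\int_{\theta_0}^{\theta_1}b\,a'\,d\theta\neq0$ whenever $\theta_0\neq\theta_1$ and $\gamma(\theta_0)=\gamma(\theta_1)$. For a crossing $c=\gamma(\theta_0)=\gamma(\theta_1)$ put $|\Delta t(c)|=|\int_{\theta_0}^{\theta_1}b\,a'\,d\theta|$. The corners of $G$ are its markings (where the curve turns by a right angle); a corner is counterclockwise (resp. clockwise) if the curve turns left (resp. right) there, relative to the orientation of the $(a,b)$-plane. Hypercube diagrams. Let $C=[0,n]^4$ with coordinates $(w,x,y,z)$. A flat is a product in which two coordinates range over $[0,n]$ and the other two over unit intervals $[k,k+1]$, $k\in\mathbb{Z}$, named by its two full coordinates; a cube is a product in which three coordinates range over $[0,n]$ and one over a unit interval. Markings are points with all coordinates in $\mathbb{Z}+\frac12$ labelled $W,X,Y,Z$. Marking conditions: each cube contains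 exactly one marking of each label; each cube contains exactly two flats containing exactly three markings; in each flat with exactly three markings these form a right angle with rays parallel to coordinate axes; and the vertex of that right angle is $W$ iff the flat is a $zw$-flat, $X$ iff a $wx$-flat, $Y$ iff an $xy$-flat, $Z$ iff a $yz$-flat. The markings are joined into an oriented closed curve by joining each $W$ to an $X$ by a $w$-parallel segment, each $X$ to a $Y$ by an $x$-parallel segment, each $Y$ to a $Z$ by a $y$-parallel segment and each $Z$ to a $W$ by a $z$-parallel segment. Its projections to the $(w,y)$-plane and $(z,x)$-plane are immersed grid diagrams $G_{wy}$ (with $(a,b)=(w,y)$) and $G_{zx}$ (with $(a,b)=(z,x)$). $H\Gamma$ is a Lagrangian hypercube diagram if the marking conditions hold, $G_{wy}$ and $G_{zx}$ are Lagrangian grid diagrams, and $|\Delta t(c)|\neq|\Delta t(c')|$ for all crossings $c$ of $G_{zx}$ and $c'$ of $G_{wy}$. Torus and lift. Parametrize $G_{zx}$ by $s\mapsto(z(s),x(s))$ and $G_{wy}$ by $u\mapsto(w(u),y(u))$ (corners smoothed slightly so that conditions (1),(2) persist). The torus determined by $H\Gamma$ is $i(s,u)=(w(u),x(s),y(u),z(s))$ (copies of $G_{zx}$ placed in the $zx$-flats at the markings of $G_{wy}$, joined by tubes swept by translation in the $w$ and $y$ directions), with loops $\gamma_{zx}=S^1\times\{1\}$, $\gamma_{wy}=\{1\}\times S^1$. On $\mathbb{R}^5$ with coordinates $(w,x,y,z,t)$ take $\alpha=dt-y\,dw-x\,dz$, $\xi=\ker\alpha$. The lift $L$ is $\{(i(p),t(p))\}$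 with $t(p)=t_0+\int_\gamma(y\,dw+x\,dz)$ for a path $\gamma$ in $T$ from a fixed base point to $p$; $\tilde\gamma_{zx},\tilde\gamma_{wy}$ are the lifts of $\gamma_{zx},\gamma_{wy}$. Rotation class. Give $\xi$ the complex structure $J$ with $J(\partial_w+y\partial_t)=\partial_y$, $J(\partial_y)=-(\partial_w+y\partial_t)$, $J(\partial_z+x\partial_t)=\partial_x$, $J(\partial_x)=-(\partial_z+x\partial_t)$. For a Legendrian embedding $f:L\to\mathbb{R}^5$, the complexification $df_{\mathbb C}:TL\otimes\mathbb{C}\to\xi$, composed with the Lagrangian projection (which identifies $(\xi,J)$ with the trivial $\mathbb{C}^2$-bundle) and made unitary by a choice of Hermitian metrics, gives an element of $U(TL\otimes\mathbb{C},\mathbb{C}^2)$; its homotopy class, viewed in $[L,U(2)]$, is the rotation class $r(L)$. $\pi_1(U(2))\cong\mathbb{Z}$ via the determinant. *)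

theory Defs
  imports "HOL-Complex_Analysis.Complex_Analysis"
begin

text \<open>A marking is encoded by its four cell indices (w,x,y,z); the actual
coordinates are these indices plus 1/2.  A hypercube diagram of size n is
given by the cyclic list of its 4n markings in the order
W_0, X_0, Y_0, Z_0, W_1, ... in which the oriented curve visits them; the
label of the marking at position i is i mod 4 (0 = W, 1 = X, 2 = Y, 3 = Z).
Coordinate index j: 0 = w, 1 = x, 2 = y, 3 = z.\<close>

type_synonym mk = "nat \<times> nat \<times> nat \<times> nat"

definition crd :: "mk \<Rightarrow> nat \<Rightarrow> nat" where
  "crd p j = (case p of (a, b, c, d) \<Rightarrow>
     if j = 0 then a else if j = 1 then b else if j = 2 then c else d)"

definition fm :: "mk list \<Rightarrow> nat \<Rightarrow> nat \<Rightarrow> nat \<Rightarrow> nat \<Rightarrow> nat set" where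
  "fm ms j k j' k' = {i. i < length ms \<and> crd (ms!i) j = k \<and> crd (ms!i) j' = k'}"

definition differs_only :: "mk \<Rightarrow> mk \<Rightarrow> nat \<Rightarrow> bool" where
  "differs_only p q c \<longleftrightarrow> crd p c \<noteq> crd q c \<and> (\<forall>c'<4. c' \<noteq> c \<longrightarrow> crd p c' = crd q c')"

text \<open>Required label of the vertex of the right angle in a flat whose fixed
coordinates are j, j' (free coordinates = the complement):
zw-flat: W, wx-flat: X, xy-flat: Y, yz-flat: Z, otherwise impossible.\<close>
definition vlabel :: "nat \<Rightarrow> nat \<Rightarrow> nat option" where
  "vlabel j j' = (let F = {0,1,2,3::nat} - {j, j'} in
     if F = {3, 0} then Some 0 else if F = {0, 1} then Some 1
     else if F = {1, 2} then Some 2 else if F = {2, 3} then Some 3 else None)"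

definition hypercube_marking :: "nat \<Rightarrow> mk list \<Rightarrow> bool" where
  "hypercube_marking n ms \<longleftrightarrow> n \<ge> 1 \<and> length ms = 4 * n \<and>
     (\<forall>i < 4 * n. \<forall>j < 4. crd (ms!i) j < n) \<and>
     \<comment> \<open>the curve: W to X is w-parallel, X to Y x-parallel, Y to Z y-parallel, Z to W z-parallel\<close>
     (\<forall>i < 4 * n. \<forall>j < 4. j \<noteq> i mod 4 \<longrightarrow> crd (ms!i) j = crd (ms!((i + 1) mod (4 * n))) j) \<and>
     \<comment> \<open>each cube contains exactly one marking of each label\<close>
     (\<forall>j < 4. \<forall>k < n. \<forall>l < 4. card {i. i < 4 * n \<and> i mod 4 = l \<and> crd (ms!i) j = k} = 1) \<and>
     \<comment> \<open>each cube contains exactly two flats with exactly three markings\<close>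
     (\<forall>j < 4. \<forall>k < n. card {(j', k'). j' < 4 \<and> j' \<noteq> j \<and> k' < n \<and> card (fm ms j k j' k') = 3} = 2) \<and>
     \<comment> \<open>three markings in a flat form an axis-parallel right angle with the prescribed vertex label\<close>
     (\<forall>j < 4. \<forall>j' < 4. \<forall>k < n. \<forall>k' < n. j \<noteq> j' \<and> card (fm ms j k j' k') = 3 \<longrightarrow>
        (\<exists>v \<in> fm ms j k j' k'. \<exists>i1 \<in> fm ms j k j' k'. \<exists>i2 \<in> fm ms j k j' k'. \<exists>c1 c2.
           c1 \<noteq> c2 \<and> differs_only (ms!v) (ms!i1) c1 \<and> differs_only (ms!v) (ms!i2) c2 \<and>
           vlabel j j' = Some (v mod 4)))"

text \<open>An immersed grid diagram of size n is given by its markings (cell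
indices (a,b)) in the cyclic order of the curve: positions 2k are markings of
the first kind, positions 2k+1 of the second kind; 2k to 2k+1 is a-parallel
(same row), 2k+1 to 2k+2 is b-parallel (same column).\<close>

definition grid_diagram :: "nat \<Rightarrow> (nat \<times> nat) list \<Rightarrow> bool" where
  "grid_diagram n vs \<longleftrightarrow> n \<ge> 1 \<and> length vs = 2 * n \<and>
     (\<forall>i < 2 * n. fst (vs!i) < n \<and> snd (vs!i) < n) \<and>
     (\<forall>k < n. snd (vs!(2*k)) = snd (vs!(2*k+1)) \<and> fst (vs!(2*k)) \<noteq> fst (vs!(2*k+1))) \<and>
     (\<forall>k < n. fst (vs!(2*k+1)) = fst (vs!((2*k+2) mod (2*n))) \<and>
              snd (vs!(2*k+1)) \<noteq> snd (vs!((2*k+2) mod (2*n)))) \<and>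
     inj_on (\<lambda>k. fst (vs!(2*k))) {..<n} \<and> inj_on (\<lambda>k. snd (vs!(2*k))) {..<n} \<and>
     inj_on (\<lambda>k. fst (vs!(2*k+1))) {..<n} \<and> inj_on (\<lambda>k. snd (vs!(2*k+1))) {..<n}"

text \<open>Centre of a cell, as a point a + i b of the (a,b)-plane.\<close>
definition ctr :: "nat \<times> nat \<Rightarrow> complex" where
  "ctr c = Complex (real (fst c) + 1/2) (real (snd c) + 1/2)"

fun join_list :: "(real \<Rightarrow> complex) list \<Rightarrow> real \<Rightarrow> complex" where
  "join_list [] = linepath 0 0"
| "join_list [g] = g"
| "join_list (g # gs) = g +++ join_list gs"

definition pl_path :: "complex list \<Rightarrow> real \<Rightarrow> complex" where
  "pl_path ps = join_list (map (\<lambda>k. linepath (ps!k) (ps!((k + 1) mod length ps))) [0..<length ps])"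

definition grid_curve :: "(nat \<times> nat) list \<Rightarrow> real \<Rightarrow> complex" where
  "grid_curve vs = pl_path (map ctr vs)"

text \<open>For a path g = a + i b, the integral of b da along g.\<close>
definition area_int :: "(real \<Rightarrow> complex) \<Rightarrow> real" where
  "area_int g = Re (contour_integral g (\<lambda>z. of_real (Im z)))"

definition dt :: "(real \<Rightarrow> complex) \<Rightarrow> real \<Rightarrow> real \<Rightarrow> real" where
  "dt g a b = area_int (subpath a b g)"

definition is_crossing :: "(real \<Rightarrow> complex) \<Rightarrow> real \<Rightarrow> real \<Rightarrow> bool" where
  "is_crossing g a b \<longleftrightarrow> a \<in> {0..<1} \<and> b \<in> {0..<1} \<and> a \<noteq> b \<and> g a = g b"

definition lagrangian_curve :: "(real \<Rightarrow> complex) \<Rightarrow> bool" where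
  "lagrangian_curve g \<longleftrightarrow> area_int g = 0 \<and> (\<forall>a b. is_crossing g a b \<longrightarrow> dt g a b \<noteq> 0)"

definition lagrangian_grid :: "nat \<Rightarrow> (nat \<times> nat) list \<Rightarrow> bool" where
  "lagrangian_grid n vs \<longleftrightarrow> grid_diagram n vs \<and> lagrangian_curve (grid_curve vs)"

section \<open>The projections G_zx ((a,b) = (z,x)) and G_wy ((a,b) = (w,y))\<close>

text \<open>G_zx: markings Z_k (first kind), W_(k+1) (second kind); G_wy: W_k (first), X_k (second).\<close>
definition gzx :: "mk list \<Rightarrow> (nat \<times> nat) list" where
  "gzx ms = concat (map (\<lambda>k. [(crd (ms!(4*k+3)) 3, crd (ms!(4*k+3)) 1),
                             (crd (ms!((4*k+4) mod length ms)) 3, crd (ms!((4*k+4) mod length ms)) 1)])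
                        [0..<length ms div 4])"

definition gwy :: "mk list \<Rightarrow> (nat \<times> nat) list" where
  "gwy ms = concat (map (\<lambda>k. [(crd (ms!(4*k)) 0, crd (ms!(4*k)) 2),
                             (crd (ms!(4*k+1)) 0, crd (ms!(4*k+1)) 2)])
                        [0..<length ms div 4])"

definition lagrangian_hypercube :: "nat \<Rightarrow> mk list \<Rightarrow> bool" where
  "lagrangian_hypercube n ms \<longleftrightarrow> hypercube_marking n ms \<and>
     lagrangian_grid n (gzx ms) \<and> lagrangian_grid n (gwy ms) \<and>
     (\<forall>a b a' b'. is_crossing (grid_curve (gzx ms)) a b \<and> is_crossing (grid_curve (gwy ms)) a' b' \<longrightarrow>
        \<bar>dt (grid_curve (gzx ms)) a b\<bar> \<noteq> \<bar>dt (grid_curve (gwy ms)) a' b'\<bar>)"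

definition turn :: "complex list \<Rightarrow> nat \<Rightarrow> real" where
  "turn ps k = (let N = length ps;
                    din = ps!k - ps!((k + N - 1) mod N);
                    dout = ps!((k + 1) mod N) - ps!k in Im (cnj din * dout))"

definition ccw_corners :: "(nat \<times> nat) list \<Rightarrow> nat" where
  "ccw_corners vs = card {k. k < length vs \<and> turn (map ctr vs) k > 0}"

definition cw_corners :: "(nat \<times> nat) list \<Rightarrow> nat" where
  "cw_corners vs = card {k. k < length vs \<and> turn (map ctr vs) k < 0}"

definition wnum :: "(nat \<times> nat) list \<Rightarrow> real" where
  "wnum vs = (real (ccw_corners vs) - real (cw_corners vs)) / 4"

text \<open>c : R -> C (2 pi periodic, C^1, regular) is a slight corner smoothing of the
closed polygon with vertices ps: the circle splits into arcs [alpha k, beta k]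
near the k-th corner (staying within distance 1/2 of it, velocity in the
closed quarter-cone spanned by the incoming and outgoing directions) and
straight arcs [beta k, alpha (k+1)] running along the k-th edge in its direction.\<close>
definition smoothing :: "complex list \<Rightarrow> (real \<Rightarrow> complex) \<Rightarrow> bool" where
  "smoothing ps c \<longleftrightarrow> (let N = length ps; d = (\<lambda>k. ps!((k + 1) mod N) - ps!(k mod N)) in
     N \<ge> 1 \<and>
     (\<forall>\<theta>. c differentiable (at \<theta>)) \<and>
     continuous_on UNIV (\<lambda>\<theta>. vector_derivative c (at \<theta>)) \<and>
     (\<forall>\<theta>. vector_derivative c (at \<theta>) \<noteq> 0) \<and>
     (\<forall>\<theta>. c (\<theta> + 2 * pi) = c \<theta>) \<and>
     (\<exists>\<alpha> \<beta> :: nat \<Rightarrow> real.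
        (\<forall>k < N. \<alpha> k < \<beta> k) \<and> (\<forall>k. Suc k < N \<longrightarrow> \<beta> k < \<alpha> (Suc k)) \<and>
        \<beta> (N - 1) < \<alpha> 0 + 2 * pi \<and>
        (\<forall>k < N. \<forall>\<theta> \<in> {\<alpha> k..\<beta> k}. cmod (c \<theta> - ps!k) < 1/2 \<and>
            (\<exists>l m. l \<ge> 0 \<and> m \<ge> 0 \<and>
               vector_derivative c (at \<theta>) = of_real l * d (k + N - 1) + of_real m * d k)) \<and>
        (\<forall>k < N. \<forall>\<theta> \<in> {\<beta> k..(if Suc k < N then \<alpha> (Suc k) else \<alpha> 0 + 2 * pi)}.
            c \<theta> \<in> closed_segment (ps!k) (ps!((k + 1) mod N)) \<and>
            (\<exists>l > 0. vector_derivative c (at \<theta>) = of_real l * d k))))"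

definition sint :: "(real \<Rightarrow> real) \<Rightarrow> real \<Rightarrow> real \<Rightarrow> real" where
  "sint f a b = (if a \<le> b then integral {a..b} f else - integral {b..a} f)"

text \<open>czx s = z(s) + i x(s), cwy u = w(u) + i y(u).  The lift
(s,u) |-> (w(u), x(s), y(u), z(s), t(s,u)) with coordinates (w,x,y,z,t),
t = t0 + integral of y dw + x dz from the base point (0,0).\<close>
definition lift :: "real \<Rightarrow> (real \<Rightarrow> complex) \<Rightarrow> (real \<Rightarrow> complex) \<Rightarrow>
                    real \<times> real \<Rightarrow> real \<times> real \<times> real \<times> real \<times> real" where
  "lift t0 czx cwy = (\<lambda>(s, u). (Re (cwy u), Im (czx s), Im (cwy u), Re (czx s),
      t0 + sint (\<lambda>\<sigma>. Im (czx \<sigma>) * Re (vector_derivative czx (at \<sigma>))) 0 s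
         + sint (\<lambda>\<tau>. Im (cwy \<tau>) * Re (vector_derivative cwy (at \<tau>))) 0 u))"

text \<open>Lagrangian projection of a vector of xi, expressed in the complex
frame e1 = d_w + y d_t, i e1 = d_y, e2 = d_z + x d_t, i e2 = d_x.\<close>
definition lag_cx :: "real \<times> real \<times> real \<times> real \<times> real \<Rightarrow> complex \<times> complex" where
  "lag_cx v = (case v of (w, x, y, z, t) \<Rightarrow> (Complex w y, Complex z x))"

definition cinner :: "complex \<times> complex \<Rightarrow> complex \<times> complex \<Rightarrow> complex" where
  "cinner a b = cnj (fst a) * fst b + cnj (snd a) * snd b"

definition cscale :: "complex \<Rightarrow> complex \<times> complex \<Rightarrow> complex \<times> complex" where
  "cscale r v = (r * fst v, r * snd v)"

text \<open>Determinant of the unitarisation (Gram--Schmidt) of the complex 2x2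
matrix with columns c1, c2.\<close>
definition det_unitary :: "complex \<times> complex \<Rightarrow> complex \<times> complex \<Rightarrow> complex" where
  "det_unitary c1 c2 =
     (let q1 = cscale (1 / of_real (sqrt (Re (cinner c1 c1)))) c1;
          c2' = (fst c2 - cinner q1 c2 * fst q1, snd c2 - cinner q1 c2 * snd q1);
          q2 = cscale (1 / of_real (sqrt (Re (cinner c2' c2')))) c2'
      in fst q1 * snd q2 - snd q1 * fst q2)"

definition frame_s :: "(real \<times> real \<Rightarrow> real \<times> real \<times> real \<times> real \<times> real) \<Rightarrow> real \<Rightarrow> real \<Rightarrow> complex \<times> complex" where
  "frame_s f s u = lag_cx (vector_derivative (\<lambda>\<sigma>. f (\<sigma>, u)) (at s))"

definition frame_u :: "(real \<times> real \<Rightarrow> real \<times> real \<times> real \<times> real \<times> real) \<Rightarrow> real \<Rightarrow> real \<Rightarrow> complex \<times> complex" where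
  "frame_u f s u = lag_cx (vector_derivative (\<lambda>\<tau>. f (s, \<tau>)) (at u))"

text \<open>Rotation class, as the pair of classes in pi_1(U(2)) = Z (via det) of its
restrictions to the loops gamma_zx (s varies, u = 0) and gamma_wy (u varies, s = 0).\<close>
definition rot_class :: "(real \<times> real \<Rightarrow> real \<times> real \<times> real \<times> real \<times> real) \<Rightarrow> complex \<times> complex" where
  "rot_class f =
     (winding_number (\<lambda>\<theta>. det_unitary (frame_s f (2 * pi * \<theta>) 0) (frame_u f (2 * pi * \<theta>) 0)) 0,
      winding_number (\<lambda>\<theta>. det_unitary (frame_s f 0 (2 * pi * \<theta>)) (frame_u f 0 (2 * pi * \<theta>))) 0)"

end

theory Submission
  imports Defs
begin

text \<open>The Lagrangian projections of the two tangent vectors of \<open>L\<close> are \<open>(0, czx'(s))\<close> and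
\<open>(cwy'(u), 0)\<close>. They are orthogonal, so unitarising only normalises them and the determinant is
\<open>- sgn cwy'(u) * sgn czx'(s)\<close>. Along \<open>\<gamma>\<^sub>z\<^sub>x\<close> the first factor is a constant unit, so the class is the
winding number of the unit tangent of the smoothed curve of \<open>G\<^sub>z\<^sub>x\<close>, and symmetrically along
\<open>\<gamma>\<^sub>w\<^sub>y\<close>. Consecutive edges of a grid curve are perpendicular; along an edge the smoothed tangent
keeps its direction, and near a corner it stays in the quarter cone spanned by the incoming and
outgoing edges, so it turns by exactly \<open>1/4\<close> or \<open>-1/4\<close> according to the orientation of the corner.\<close>

definition winding_on :: "(real \<Rightarrow> complex) \<Rightarrow> real \<Rightarrow> real \<Rightarrow> complex" where
  "winding_on V a b = winding_number (\<lambda>t. V (a + (b - a) * t)) 0"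

lemma affine_mem_atLeastAtMost:
  fixes a b t :: real
  assumes "a \<le> b" and "t \<in> {0..1}"
  shows "a + (b - a) * t \<in> {a..b}"
  using assms mult_left_le[of t "b - a"] by auto

lemma winding_on_eq_Ln:
  assumes cont: "continuous_on UNIV V" and w: "w \<noteq> 0" and "a \<le> b"
    and not_nonpos: "\<And>\<theta>. \<theta> \<in> {a..b} \<Longrightarrow> V \<theta> / w \<notin> \<real>\<^sub>\<le>\<^sub>0"
  shows "winding_on V a b = (Ln (V b / w) - Ln (V a / w)) / (2 * of_real pi * \<i>)"
proof -
  define h where "h t = Ln (V (a + (b - a) * t) / w) + Ln w" for t
  note seg = affine_mem_atLeastAtMost[OF \<open>a \<le> b\<close>]
  have "winding_on V a b = winding_number (exp \<circ> h) 0"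
    unfolding winding_on_def
  proof (rule winding_number_cong)
    fix t :: real assume "0 \<le> t" "t \<le> 1"
    then have "V (a + (b - a) * t) / w \<noteq> 0" using not_nonpos[OF seg[of t]] by auto
    then show "V (a + (b - a) * t) = (exp \<circ> h) t"
      using w by (simp add: h_def exp_add)
  qed
  also have "\<dots> = (pathfinish h - pathstart h) / (2 * of_real pi * \<i>)"
  proof (rule winding_number_compose_exp)
    have cont_quotient: "continuous_on {0..1} (\<lambda>t. V (a + (b - a) * t) / w)"
      using w by (intro continuous_intros continuous_on_compose2[OF cont]) auto
    have "continuous_on {0..1} (\<lambda>t. Ln (V (a + (b - a) * t) / w))"
      by (rule continuous_on_compose2[OF continuous_on_Ln cont_quotient,
            of "(\<lambda>t. V (a + (b - a) * t) / w) ` {0..1}"]) (use not_nonpos seg in auto)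
    then show "path h" unfolding path_def h_def by (intro continuous_on_add continuous_on_const)
  qed
  finally show ?thesis by (simp add: h_def pathfinish_def pathstart_def diff_divide_distrib)
qed

lemma winding_on_const:
  assumes "w \<noteq> 0" and "a \<le> b" and "\<And>\<theta>. \<theta> \<in> {a..b} \<Longrightarrow> V \<theta> = w"
  shows "winding_on V a b = 0"
proof -
  have "winding_on V a b = winding_number (\<lambda>t. w) 0"
    unfolding winding_on_def
    by (rule winding_number_cong) (auto intro!: assms(3) affine_mem_atLeastAtMost[OF \<open>a \<le> b\<close>])
  then show ?thesis using winding_number_zero_const[OF \<open>w \<noteq> 0\<close>] by simp
qed

lemma winding_on_add:
  assumes cont: "continuous_on UNIV V" and nz: "\<And>x. V x \<noteq> 0"
  shows "winding_on V a b + winding_on V b c = winding_on V a c"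
proof (cases "min a (min b c) = max a (max b c)")
  case True
  then have "a = b" "b = c" by linarith+
  then show ?thesis using nz by (simp add: winding_on_def winding_number_zero_const)
next
  case False
  define m where "m = min a (min b c)"
  define M where "M = max a (max b c)"
  have "m < M" using False unfolding m_def M_def by linarith
  define Q where "Q t = V (m + (M - m) * t)" for t
  have path_Q: "path Q" unfolding path_def Q_def
    by (intro continuous_on_compose2[OF cont] continuous_intros) auto
  have "0 \<notin> path_image Q" using nz by (auto simp: path_image_def Q_def)
  define r where "r x = (x - m) / (M - m)" for x
  have r01: "r x \<in> {0..1}" if "x \<in> {a,b,c}" for x
    using that \<open>m < M\<close> unfolding r_def m_def M_def by (auto simp: field_simps)
  \<comment> \<open>every piece is a subpath of the reparametrisation Q of V on [m, M]\<close>
  have "subpath (r x) (r y) Q = (\<lambda>t. V (x + (y - x) * t))" for x y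
  proof
    fix t
    have rr: "(M - m) * r z = z - m" for z using \<open>m < M\<close> unfolding r_def by simp
    have "(M - m) * ((r y - r x) * t + r x) = ((M - m) * r y - (M - m) * r x) * t + (M - m) * r x"
      by (simp add: algebra_simps)
    also have "\<dots> = (y - x) * t + (x - m)" by (simp add: rr)
    finally have "m + (M - m) * ((r y - r x) * t + r x) = x + (y - x) * t" by simp
    then show "subpath (r x) (r y) Q t = V (x + (y - x) * t)"
      unfolding subpath_def Q_def by simp
  qed
  then show ?thesis
    using winding_number_subpath_combine[OF path_Q \<open>0 \<notin> path_image Q\<close> r01[of a] r01[of b] r01[of c]]
    by (simp add: winding_on_def)
qed

lemma winding_on_sum:
  assumes "continuous_on UNIV V" and "\<And>x. V x \<noteq> 0"
  shows "winding_on V (A 0) (A m) = (\<Sum>k<m. winding_on V (A k) (A (Suc k)))"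
proof (induction m)
  case 0
  then show ?case using winding_on_add[OF assms, of "A 0" "A 0" "A 0"] by simp
next
  case (Suc m)
  then show ?case using winding_on_add[OF assms, of "A 0" "A m" "A (Suc m)"] by simp
qed

lemma winding_on_shift_period:
  assumes "continuous_on UNIV V" and "\<And>x. V x \<noteq> 0" and per: "\<And>x. V (x + p) = V x"
  shows "winding_on V a (a + p) = winding_on V 0 p"
proof -
  have "V (p + a * t) = V (a * t)" for t using per[of "a * t"] by (simp add: add.commute)
  then have "winding_on V p (a + p) = winding_on V 0 a"
    unfolding winding_on_def by simp
  moreover have "winding_on V 0 a + winding_on V a (a + p) = winding_on V 0 p + winding_on V p (a + p)"
    using winding_on_add[OF assms(1,2), of 0 a "a + p"] winding_on_add[OF assms(1,2), of 0 p "a + p"]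
    by simp
  ultimately show ?thesis by simp
qed

lemma perp_quotient:
  fixes p q :: complex
  assumes "p \<noteq> 0" and "Re (cnj p * q) = 0"
  shows "q / p = \<i> * of_real (Im (cnj p * q) / (cmod p)\<^sup>2)"
proof -
  have "cnj p * q = \<i> * of_real (Im (cnj p * q))"
    using assms(2) by (simp add: complex_eq_iff)
  moreover have "q / p = cnj p * q / (p * cnj p)" using assms(1) by (simp add: field_simps)
  ultimately show ?thesis by (simp add: complex_norm_square[symmetric])
qed

lemma perp_Im_cnj_mult_nonzero:
  fixes p q :: complex
  assumes "p \<noteq> 0" and "q \<noteq> 0" and "Re (cnj p * q) = 0"
  shows "Im (cnj p * q) \<noteq> 0"
proof
  assume "Im (cnj p * q) = 0"
  with assms(3) have "cnj p * q = 0" by (simp add: complex_eq_iff)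
  with assms(1,2) show False by simp
qed

lemma sgn_quotient_perp:
  fixes p q :: complex
  assumes "p \<noteq> 0" and "q \<noteq> 0" and "Re (cnj p * q) = 0"
  shows "sgn q / sgn p = (if Im (cnj p * q) > 0 then \<i> else - \<i>)"
proof -
  define t where "t = Im (cnj p * q) / (cmod p)\<^sup>2"
  have "sgn q / sgn p = sgn (\<i> * of_real t)"
    by (simp add: perp_quotient[OF assms(1,3)] t_def flip: sgn_divide)
  also have "\<dots> = \<i> * of_real (sgn t)"
    unfolding sgn_mult sgn_of_real by (simp add: sgn_eq)
  moreover have "t > 0 \<longleftrightarrow> Im (cnj p * q) > 0" "t \<noteq> 0"
    using perp_Im_cnj_mult_nonzero[OF assms] assms(1) by (auto simp: t_def zero_less_divide_iff)
  ultimately show ?thesis by (auto simp: sgn_if)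
qed

lemma sgn_cone_quotient_not_nonpos:
  fixes p q :: complex and l m :: real
  assumes "p \<noteq> 0" and "q \<noteq> 0" and "Re (cnj p * q) = 0"
    and "l \<ge> 0" and "m \<ge> 0" and v: "v = of_real l * p + of_real m * q" and "v \<noteq> 0"
  shows "sgn v / sgn p \<notin> \<real>\<^sub>\<le>\<^sub>0"
proof
  assume "sgn v / sgn p \<in> \<real>\<^sub>\<le>\<^sub>0"
  define t where "t = Im (cnj p * q) / (cmod p)\<^sup>2"
  have "v / p = of_real l + of_real m * (q / p)" using assms(1) by (simp add: v field_simps)
  then have "v / p = Complex l (m * t)"
    by (simp add: perp_quotient[OF assms(1,3)] t_def complex_eq_iff)
  then have "sgn v / sgn p = Complex (l / cmod (v / p)) (m * t / cmod (v / p))"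
    by (simp flip: sgn_divide add: complex_eq_iff)
  moreover have "cmod (v / p) > 0" using assms(1,7) by simp
  ultimately have "l \<le> 0" "m * t = 0"
    using \<open>sgn v / sgn p \<in> \<real>\<^sub>\<le>\<^sub>0\<close> by (auto simp: complex_nonpos_Reals_iff divide_le_0_iff)
  moreover have "t \<noteq> 0" using perp_Im_cnj_mult_nonzero[OF assms(1-3)] assms(1) by (simp add: t_def)
  ultimately have "l = 0" "m = 0" using \<open>l \<ge> 0\<close> by auto
  with v \<open>v \<noteq> 0\<close> show False by simp
qed

lemma winding_on_straight_arc:
  assumes "K \<noteq> 0" and "e \<noteq> 0" and "a \<le> b"
    and "\<And>\<theta>. \<theta> \<in> {a..b} \<Longrightarrow> \<exists>l>0. D \<theta> = of_real l * e"
  shows "winding_on (\<lambda>\<theta>. K * sgn (D \<theta>)) a b = 0"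
proof (rule winding_on_const)
  show "K * sgn (D \<theta>) = K * sgn e" if "\<theta> \<in> {a..b}" for \<theta>
    using assms(4)[OF that] by (auto simp: sgn_mult sgn_of_real)
qed (use assms in \<open>auto simp: sgn_zero_iff\<close>)

lemma winding_on_corner_arc:
  assumes cont: "continuous_on UNIV D" and nz: "\<And>\<theta>. D \<theta> \<noteq> 0" and "K \<noteq> 0" and "a \<le> b"
    and p: "p \<noteq> 0" and q: "q \<noteq> 0" and perp: "Re (cnj p * q) = 0"
    and start: "\<exists>l>0. D a = of_real l * p" and stop: "\<exists>l>0. D b = of_real l * q"
    and cone: "\<And>\<theta>. \<theta> \<in> {a..b} \<Longrightarrow> \<exists>l m. l \<ge> 0 \<and> m \<ge> 0 \<and> D \<theta> = of_real l * p + of_real m * q"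
  shows "winding_on (\<lambda>\<theta>. K * sgn (D \<theta>)) a b = (if Im (cnj p * q) > 0 then 1/4 else -1/4)"
proof -
  have sgn_pos_mult: "sgn (of_real l * z) = sgn z" if "l > 0" for l and z :: complex
    using that by (simp add: sgn_mult sgn_of_real)
  have w: "K * sgn p \<noteq> 0" using \<open>K \<noteq> 0\<close> p by (simp add: sgn_zero_iff)
  have "winding_on (\<lambda>\<theta>. K * sgn (D \<theta>)) a b =
      (Ln (sgn (D b) / sgn p) - Ln (sgn (D a) / sgn p)) / (2 * of_real pi * \<i>)"
  proof (subst winding_on_eq_Ln[OF _ w \<open>a \<le> b\<close>])
    show "continuous_on UNIV (\<lambda>\<theta>. K * sgn (D \<theta>))"
      using nz by (intro continuous_intros cont) auto
    show "K * sgn (D \<theta>) / (K * sgn p) \<notin> \<real>\<^sub>\<le>\<^sub>0" if "\<theta> \<in> {a..b}" for \<theta>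
      using cone[OF that] sgn_cone_quotient_not_nonpos[OF p q perp _ _ _ nz] \<open>K \<noteq> 0\<close> by auto
  qed (use \<open>K \<noteq> 0\<close> in simp)
  also have "\<dots> = Ln (sgn q / sgn p) / (2 * of_real pi * \<i>)"
    using start stop p by (auto simp: sgn_pos_mult sgn_zero_iff)
  also have "\<dots> = (if Im (cnj p * q) > 0 then 1/4 else -1/4)"
    by (simp add: sgn_quotient_perp[OF p q perp] Ln_minus_ii field_simps)
  finally show ?thesis .
qed

definition polygon_edge :: "complex list \<Rightarrow> nat \<Rightarrow> complex" where
  "polygon_edge ps j = ps!((j + 1) mod length ps) - ps!(j mod length ps)"

lemma polygon_edge_add_length: "polygon_edge ps (j + length ps) = polygon_edge ps j"
  by (simp add: polygon_edge_def flip: add_Suc)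

lemma polygon_edge_incoming_succ:
  assumes "k < length ps"
  shows "polygon_edge ps (Suc (k + length ps - 1)) = polygon_edge ps k"
proof -
  have "Suc (k + length ps - 1) = k + length ps" using assms by simp
  then show ?thesis using polygon_edge_add_length[of ps k] by simp
qed

lemma turn_eq_polygon_edge:
  assumes "k < length ps"
  shows "turn ps k = Im (cnj (polygon_edge ps (k + length ps - 1)) * polygon_edge ps k)"
proof -
  have "Suc (k + length ps - 1) = k + length ps" using assms by simp
  then show ?thesis using assms by (simp add: turn_def polygon_edge_def Let_def algebra_simps)
qed

lemma turn_nonzero_rectilinear:
  assumes "\<And>j. polygon_edge ps j \<noteq> 0"
    and "\<And>j. Re (cnj (polygon_edge ps j) * polygon_edge ps (Suc j)) = 0"
    and "k < length ps"
  shows "turn ps k \<noteq> 0"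
proof -
  have "Im (cnj (polygon_edge ps (k + length ps - 1)) * polygon_edge ps k) \<noteq> 0"
    using perp_Im_cnj_mult_nonzero[OF assms(1,1) assms(2)[of "k + length ps - 1"]]
    unfolding polygon_edge_incoming_succ[OF assms(3)] .
  then show ?thesis unfolding turn_eq_polygon_edge[OF assms(3)] .
qed

lemma vector_derivative_periodic:
  assumes "c differentiable (at x)" and "\<And>\<theta>. c (\<theta> + p) = c \<theta>"
  shows "vector_derivative c (at (x + p)) = vector_derivative c (at x)"
proof -
  have "c = c \<circ> (\<lambda>y. y - p)" using assms(2)[of "_ - p"] by (simp add: fun_eq_iff)
  moreover have "(c \<circ> (\<lambda>y. y - p) has_vector_derivative vector_derivative c (at x)) (at (x + p))"
    by (rule vector_diff_chain_at[where f' = 1, simplified])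
       (auto intro!: derivative_eq_intros simp: vector_derivative_works[symmetric] assms(1))
  ultimately show ?thesis by (metis vector_derivative_at)
qed

lemma smoothing_regular:
  assumes "smoothing ps c"
  shows "\<And>\<theta>. c differentiable (at \<theta>)"
    and "continuous_on UNIV (\<lambda>\<theta>. vector_derivative c (at \<theta>))"
    and "\<And>\<theta>. vector_derivative c (at \<theta>) \<noteq> 0"
    and "\<And>\<theta>. c (\<theta> + 2 * pi) = c \<theta>"
  using assms unfolding smoothing_def Let_def by blast+

lemma smoothing_arcs:
  assumes "smoothing ps c"
  obtains A \<beta> :: "nat \<Rightarrow> real"
  where "A (length ps) = A 0 + 2 * pi"
    and "\<And>k. k < length ps \<Longrightarrow> A k < \<beta> k \<and> \<beta> k < A (Suc k)"
    and "\<And>k \<theta>. k < length ps \<Longrightarrow> \<theta> \<in> {A k..\<beta> k} \<Longrightarrow>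
           \<exists>l m. l \<ge> 0 \<and> m \<ge> 0 \<and> vector_derivative c (at \<theta>) =
             of_real l * polygon_edge ps (k + length ps - 1) + of_real m * polygon_edge ps k"
    and "\<And>k \<theta>. k < length ps \<Longrightarrow> \<theta> \<in> {\<beta> k..A (Suc k)} \<Longrightarrow>
           \<exists>l>0. vector_derivative c (at \<theta>) = of_real l * polygon_edge ps k"
proof -
  define N where "N = length ps"
  obtain \<alpha> \<beta> :: "nat \<Rightarrow> real" where
    "N \<ge> 1" and "\<forall>k < N. \<alpha> k < \<beta> k" and "\<forall>k. Suc k < N \<longrightarrow> \<beta> k < \<alpha> (Suc k)"
    and "\<beta> (N - 1) < \<alpha> 0 + 2 * pi"
    and corner: "\<forall>k < N. \<forall>\<theta> \<in> {\<alpha> k..\<beta> k}. \<exists>l m. l \<ge> 0 \<and> m \<ge> 0 \<and>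
           vector_derivative c (at \<theta>) = of_real l * polygon_edge ps (k + N - 1) + of_real m * polygon_edge ps k"
    and edge: "\<forall>k < N. \<forall>\<theta> \<in> {\<beta> k..(if Suc k < N then \<alpha> (Suc k) else \<alpha> 0 + 2 * pi)}.
           \<exists>l>0. vector_derivative c (at \<theta>) = of_real l * polygon_edge ps k"
    using assms unfolding smoothing_def Let_def polygon_edge_def N_def[symmetric] by blast
  \<comment> \<open>the arcs, with the first corner repeated one period later\<close>
  define A where "A k = (if k < N then \<alpha> k else \<alpha> 0 + 2 * pi)" for k
  show thesis
  proof (rule that[of A \<beta>, folded N_def])
    show "A N = A 0 + 2 * pi" using \<open>N \<ge> 1\<close> by (simp add: A_def)
    show "A k < \<beta> k \<and> \<beta> k < A (Suc k)" if "k < N" for k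
    proof (cases "Suc k < N")
      case False
      then have "k = N - 1" using that by simp
      then show ?thesis
        using that False \<open>\<forall>k < N. \<alpha> k < \<beta> k\<close> \<open>\<beta> (N - 1) < \<alpha> 0 + 2 * pi\<close>
        by (simp add: A_def)
    qed (use that \<open>\<forall>k < N. \<alpha> k < \<beta> k\<close> \<open>\<forall>k. Suc k < N \<longrightarrow> \<beta> k < \<alpha> (Suc k)\<close>
      in \<open>simp add: A_def\<close>)
  qed (use corner edge in \<open>auto simp: A_def\<close>)
qed

lemma smoothing_arcs_with_ends:
  assumes sm: "smoothing ps c"
  obtains A \<beta> :: "nat \<Rightarrow> real"
  where "A (length ps) = A 0 + 2 * pi"
    and "\<And>k. k < length ps \<Longrightarrow> A k < \<beta> k \<and> \<beta> k < A (Suc k)"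
    and "\<And>k \<theta>. k < length ps \<Longrightarrow> \<theta> \<in> {A k..\<beta> k} \<Longrightarrow>
           \<exists>l m. l \<ge> 0 \<and> m \<ge> 0 \<and> vector_derivative c (at \<theta>) =
             of_real l * polygon_edge ps (k + length ps - 1) + of_real m * polygon_edge ps k"
    and "\<And>k. k < length ps \<Longrightarrow>
           \<exists>l>0. vector_derivative c (at (A k)) = of_real l * polygon_edge ps (k + length ps - 1)"
    and "\<And>k. k < length ps \<Longrightarrow> \<exists>l>0. vector_derivative c (at (\<beta> k)) = of_real l * polygon_edge ps k"
    and "\<And>k \<theta>. k < length ps \<Longrightarrow> \<theta> \<in> {\<beta> k..A (Suc k)} \<Longrightarrow>
           \<exists>l>0. vector_derivative c (at \<theta>) = of_real l * polygon_edge ps k"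
proof -
  define N where "N = length ps"
  define D where "D \<theta> = vector_derivative c (at \<theta>)" for \<theta>
  obtain A \<beta> where AN: "A N = A 0 + 2 * pi"
    and order: "\<And>k. k < N \<Longrightarrow> A k < \<beta> k \<and> \<beta> k < A (Suc k)"
    and corner: "\<And>k \<theta>. k < N \<Longrightarrow> \<theta> \<in> {A k..\<beta> k} \<Longrightarrow>
           \<exists>l m. l \<ge> 0 \<and> m \<ge> 0 \<and> D \<theta> = of_real l * polygon_edge ps (k + N - 1) + of_real m * polygon_edge ps k"
    and edge: "\<And>k \<theta>. k < N \<Longrightarrow> \<theta> \<in> {\<beta> k..A (Suc k)} \<Longrightarrow> \<exists>l>0. D \<theta> = of_real l * polygon_edge ps k"
    using smoothing_arcs[OF sm] unfolding N_def[symmetric] D_def by blast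
  have perD: "D (\<theta> + 2 * pi) = D \<theta>" for \<theta>
    unfolding D_def using vector_derivative_periodic[OF smoothing_regular(1,4)[OF sm]] .
  \<comment> \<open>the corner arc starts where the straight arc along the incoming edge ends\<close>
  have entry: "\<exists>l>0. D (A k) = of_real l * polygon_edge ps (k + N - 1)" if "k < N" for k
  proof (cases k)
    case 0
    have "A N \<in> {\<beta> (N - 1)..A (Suc (N - 1))}" using order[of "N - 1"] that by simp
    then have "\<exists>l>0. D (A N) = of_real l * polygon_edge ps (N - 1)" using edge that by simp
    then show ?thesis using AN perD 0 by simp
  next
    case (Suc k')
    have "A k \<in> {\<beta> k'..A (Suc k')}" using order[of k'] that Suc by simp
    moreover have "polygon_edge ps (k + N - 1) = polygon_edge ps k'"
      using Suc polygon_edge_add_length[of ps k'] by (simp add: N_def)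
    ultimately show ?thesis using edge[of k' "A k"] that Suc by simp
  qed
  have "\<exists>l>0. D (\<beta> k) = of_real l * polygon_edge ps k" if "k < N" for k
    using edge[OF that] order[OF that] by simp
  with AN order corner entry edge show thesis
    using that unfolding N_def D_def by blast
qed

lemma smoothing_tangent_winding:
  assumes sm: "smoothing ps c" and K: "K \<noteq> 0"
    and edge_nz: "\<And>j. polygon_edge ps j \<noteq> 0"
    and edge_perp: "\<And>j. Re (cnj (polygon_edge ps j) * polygon_edge ps (Suc j)) = 0"
  shows "winding_on (\<lambda>\<theta>. K * sgn (vector_derivative c (at \<theta>))) 0 (2 * pi) =
         (\<Sum>k<length ps. if turn ps k > 0 then 1/4 else -1/4)"
proof -
  define N where "N = length ps"
  define D where "D \<theta> = vector_derivative c (at \<theta>)" for \<theta>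
  define V where "V \<theta> = K * sgn (D \<theta>)" for \<theta>
  note regular = smoothing_regular[OF sm]
  have contD: "continuous_on UNIV D" and nzD: "\<And>\<theta>. D \<theta> \<noteq> 0"
    using regular(2,3) by (simp_all add: D_def[abs_def])
  have contV: "continuous_on UNIV V" unfolding V_def using nzD by (intro continuous_intros contD) auto
  have nzV: "V \<theta> \<noteq> 0" for \<theta> using nzD K by (simp add: V_def sgn_zero_iff)
  have perV: "V (\<theta> + 2 * pi) = V \<theta>" for \<theta>
    unfolding V_def D_def using vector_derivative_periodic[OF regular(1,4)] by simp
  obtain A \<beta> where AN: "A N = A 0 + 2 * pi"
    and order: "\<And>k. k < N \<Longrightarrow> A k < \<beta> k \<and> \<beta> k < A (Suc k)"
    and corner: "\<And>k \<theta>. k < N \<Longrightarrow> \<theta> \<in> {A k..\<beta> k} \<Longrightarrow>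
           \<exists>l m. l \<ge> 0 \<and> m \<ge> 0 \<and> D \<theta> = of_real l * polygon_edge ps (k + N - 1) + of_real m * polygon_edge ps k"
    and entry: "\<And>k. k < N \<Longrightarrow> \<exists>l>0. D (A k) = of_real l * polygon_edge ps (k + N - 1)"
    and exit: "\<And>k. k < N \<Longrightarrow> \<exists>l>0. D (\<beta> k) = of_real l * polygon_edge ps k"
    and edge: "\<And>k \<theta>. k < N \<Longrightarrow> \<theta> \<in> {\<beta> k..A (Suc k)} \<Longrightarrow> \<exists>l>0. D \<theta> = of_real l * polygon_edge ps k"
    using smoothing_arcs_with_ends[OF sm] unfolding N_def[symmetric] D_def by blast
  have piece: "winding_on V (A k) (A (Suc k)) = (if turn ps k > 0 then 1/4 else -1/4)" if "k < N" for k
  proof -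
    have "Re (cnj (polygon_edge ps (k + N - 1)) * polygon_edge ps k) = 0"
      using edge_perp[of "k + N - 1"] polygon_edge_incoming_succ[of k ps] that by (simp add: N_def)
    then have "winding_on V (A k) (\<beta> k) = (if turn ps k > 0 then 1/4 else -1/4)"
      unfolding V_def turn_eq_polygon_edge[OF that[unfolded N_def]] N_def[symmetric]
      using winding_on_corner_arc[OF contD nzD K _ edge_nz edge_nz] order entry exit corner that
      by (simp add: less_imp_le)
    moreover have "winding_on V (\<beta> k) (A (Suc k)) = 0"
      unfolding V_def by (rule winding_on_straight_arc[OF K edge_nz]) (use order[OF that] edge[OF that] in auto)
    ultimately show ?thesis using winding_on_add[OF contV nzV, of "A k" "\<beta> k" "A (Suc k)"] by simp
  qed
  have "winding_on V 0 (2 * pi) = winding_on V (A 0) (A N)"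
    using winding_on_shift_period[OF contV nzV perV] AN by simp
  also have "\<dots> = (\<Sum>k<N. winding_on V (A k) (A (Suc k)))" by (rule winding_on_sum[OF contV nzV])
  also have "\<dots> = (\<Sum>k<N. if turn ps k > 0 then 1/4 else -1/4)" by (simp add: piece)
  finally show ?thesis unfolding V_def D_def N_def .
qed

lemma grid_edge_axis:
  assumes grid: "grid_diagram n vs"
  shows "even j \<Longrightarrow> Im (polygon_edge (map ctr vs) j) = 0 \<and> Re (polygon_edge (map ctr vs) j) \<noteq> 0"
    and "odd j \<Longrightarrow> Re (polygon_edge (map ctr vs) j) = 0 \<and> Im (polygon_edge (map ctr vs) j) \<noteq> 0"
proof -
  have "n \<ge> 1" and len: "length vs = 2 * n" using grid by (auto simp: grid_diagram_def)
  define i where "i = j mod (2 * n)"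
  have "i < 2 * n" using \<open>n \<ge> 1\<close> by (simp add: i_def)
  have parity: "even i \<longleftrightarrow> even j" by (simp add: i_def dvd_mod_iff)
  have edge: "polygon_edge (map ctr vs) j = ctr (vs!((i + 1) mod (2 * n))) - ctr (vs!i)"
    using \<open>i < 2 * n\<close> len by (simp add: polygon_edge_def i_def mod_Suc_eq)
  show "Im (polygon_edge (map ctr vs) j) = 0 \<and> Re (polygon_edge (map ctr vs) j) \<noteq> 0" if "even j"
  proof -
    obtain k where k: "i = 2 * k" using \<open>even j\<close> parity by (auto elim: evenE)
    then have "k < n" "(i + 1) mod (2 * n) = 2 * k + 1" using \<open>i < 2 * n\<close> by auto
    moreover have "snd (vs!(2*k)) = snd (vs!(2*k+1)) \<and> fst (vs!(2*k)) \<noteq> fst (vs!(2*k+1))"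
      using grid \<open>k < n\<close> unfolding grid_diagram_def by blast
    ultimately show ?thesis using k unfolding edge by (simp add: ctr_def)
  qed
  show "Re (polygon_edge (map ctr vs) j) = 0 \<and> Im (polygon_edge (map ctr vs) j) \<noteq> 0" if "odd j"
  proof -
    obtain k where k: "i = 2 * k + 1" using \<open>odd j\<close> parity by (auto elim: oddE)
    then have "k < n" "(i + 1) mod (2 * n) = (2 * k + 2) mod (2 * n)" using \<open>i < 2 * n\<close> by auto
    moreover have "fst (vs!(2*k+1)) = fst (vs!((2*k+2) mod (2*n))) \<and>
        snd (vs!(2*k+1)) \<noteq> snd (vs!((2*k+2) mod (2*n)))"
      using grid \<open>k < n\<close> unfolding grid_diagram_def by blast
    ultimately show ?thesis using k unfolding edge by (simp add: ctr_def)
  qed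
qed

lemma grid_edge_nonzero: "grid_diagram n vs \<Longrightarrow> polygon_edge (map ctr vs) j \<noteq> 0"
  using grid_edge_axis[of n vs j] by (cases "even j") auto

lemma grid_edge_perp:
  "grid_diagram n vs \<Longrightarrow> Re (cnj (polygon_edge (map ctr vs) j) * polygon_edge (map ctr vs) (Suc j)) = 0"
  using grid_edge_axis[of n vs j] grid_edge_axis[of n vs "Suc j"] by (cases "even j") auto

lemma quarter_turn_sum_eq_wnum:
  assumes "\<And>k. k < length vs \<Longrightarrow> turn (map ctr vs) k \<noteq> 0"
  shows "(\<Sum>k<length vs. if turn (map ctr vs) k > 0 then 1/4 else -1/4) = complex_of_real (wnum vs)"
proof -
  have ccw: "{..<length vs} \<inter> {k. turn (map ctr vs) k > 0} = {k. k < length vs \<and> turn (map ctr vs) k > 0}"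
    by auto
  have cw: "{..<length vs} \<inter> - {k. turn (map ctr vs) k > 0} = {k. k < length vs \<and> turn (map ctr vs) k < 0}"
    using assms by (auto simp: less_le)
  show ?thesis
    unfolding sum.If_cases[OF finite_lessThan] ccw cw wnum_def ccw_corners_def cw_corners_def
    by (simp add: field_simps)
qed

lemma grid_smoothing_tangent_winding:
  assumes grid: "grid_diagram n vs" and "smoothing (map ctr vs) c" and "K \<noteq> 0"
  shows "winding_on (\<lambda>\<theta>. K * sgn (vector_derivative c (at \<theta>))) 0 (2 * pi) = complex_of_real (wnum vs)"
proof -
  note rectilinear = grid_edge_nonzero[OF grid] grid_edge_perp[OF grid]
  have "turn (map ctr vs) k \<noteq> 0" if "k < length vs" for k
    using turn_nonzero_rectilinear[OF rectilinear] that by simp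
  then show ?thesis
    using smoothing_tangent_winding[OF assms(2,3) rectilinear] quarter_turn_sum_eq_wnum by simp
qed

lemma sint_eq_integral_diff:
  fixes f :: "real \<Rightarrow> real"
  assumes cont: "continuous_on UNIV f" and "a \<le> x" and "a \<le> 0"
  shows "sint f 0 x = integral {a..x} f - integral {a..0} f"
proof (cases "0 \<le> x")
  case True
  have "integral {a..0} f + integral {0..x} f = integral {a..x} f"
    by (rule Henstock_Kurzweil_Integration.integral_combine[OF \<open>a \<le> 0\<close> True])
       (intro integrable_continuous_real continuous_on_subset[OF cont], simp)
  then show ?thesis using True by (simp add: sint_def)
next
  case False
  have "integral {a..x} f + integral {x..0} f = integral {a..0} f"
    by (rule Henstock_Kurzweil_Integration.integral_combine[OF \<open>a \<le> x\<close>])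
       (use False in \<open>auto intro!: integrable_continuous_real continuous_on_subset[OF cont]\<close>)
  then show ?thesis using False by (simp add: sint_def)
qed

lemma sint_has_vector_derivative:
  fixes f :: "real \<Rightarrow> real"
  assumes cont: "continuous_on UNIV f"
  shows "((\<lambda>x. sint f 0 x) has_vector_derivative f s) (at s)"
proof -
  define a where "a = - \<bar>s\<bar> - 1"
  define b where "b = \<bar>s\<bar> + 1"
  have "((\<lambda>x. integral {a..x} f) has_vector_derivative f s) (at s within {a..b})"
    by (rule integral_has_vector_derivative) (auto intro: continuous_on_subset[OF cont] simp: a_def b_def)
  then have "((\<lambda>x. integral {a..x} f) has_vector_derivative f s) (at s within {a<..<b})"
    by (rule has_vector_derivative_within_subset) auto
  then have "((\<lambda>x. integral {a..x} f) has_vector_derivative f s) (at s)"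
    by (subst (asm) has_vector_derivative_within_open) (auto simp: a_def b_def)
  then have "((\<lambda>x. integral {a..x} f - integral {a..0} f) has_vector_derivative f s) (at s)"
    by (auto intro!: derivative_eq_intros)
  then show ?thesis
    by (rule has_vector_derivative_transform_within_open[where S = "{a<..<b}"])
       (auto simp: a_def b_def intro!: sint_eq_integral_diff[OF cont, symmetric])
qed

lemma area_integrand_continuous:
  assumes "\<And>\<theta>. c differentiable (at \<theta>)" and "continuous_on UNIV (\<lambda>\<theta>. vector_derivative c (at \<theta>))"
  shows "continuous_on UNIV (\<lambda>\<sigma>. Im (c \<sigma>) * Re (vector_derivative c (at \<sigma>)))"
proof -
  have "continuous_on UNIV c"
    using assms(1) by (simp add: continuous_at_imp_continuous_on differentiable_imp_continuous_within)
  then show ?thesis using assms(2) by (intro continuous_intros) auto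
qed

lemmas has_vector_derivative_Re = has_field_derivative_Re[unfolded has_real_derivative_iff_has_vector_derivative]
lemmas has_vector_derivative_Im = has_field_derivative_Im[unfolded has_real_derivative_iff_has_vector_derivative]

lemma frame_s_lift:
  assumes "\<And>\<theta>. cz differentiable (at \<theta>)" and "continuous_on UNIV (\<lambda>\<theta>. vector_derivative cz (at \<theta>))"
  shows "frame_s (lift t0 cz cw) s u = (0, vector_derivative cz (at s))"
proof -
  define D where "D = vector_derivative cz (at s)"
  have "(cz has_vector_derivative D) (at s)" unfolding D_def using assms(1) vector_derivative_works by blast
  moreover have "((\<lambda>\<sigma>. sint (\<lambda>\<sigma>. Im (cz \<sigma>) * Re (vector_derivative cz (at \<sigma>))) 0 \<sigma>)
      has_vector_derivative Im (cz s) * Re D) (at s)"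
    unfolding D_def by (rule sint_has_vector_derivative[OF area_integrand_continuous[OF assms]])
  ultimately have "((\<lambda>\<sigma>. lift t0 cz cw (\<sigma>, u)) has_vector_derivative
      (0, Im D, 0, Re D, Im (cz s) * Re D)) (at s)"
    unfolding lift_def
    by (auto intro!: has_vector_derivative_Pair has_vector_derivative_Re has_vector_derivative_Im
        derivative_eq_intros)
  then show ?thesis
    unfolding frame_s_def lag_cx_def D_def by (simp add: vector_derivative_at complex_eq_iff)
qed

lemma frame_u_lift:
  assumes "\<And>\<theta>. cw differentiable (at \<theta>)" and "continuous_on UNIV (\<lambda>\<theta>. vector_derivative cw (at \<theta>))"
  shows "frame_u (lift t0 cz cw) s u = (vector_derivative cw (at u), 0)"
proof -
  define D where "D = vector_derivative cw (at u)"
  have "(cw has_vector_derivative D) (at u)" unfolding D_def using assms(1) vector_derivative_works by blast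
  moreover have "((\<lambda>\<tau>. sint (\<lambda>\<tau>. Im (cw \<tau>) * Re (vector_derivative cw (at \<tau>))) 0 \<tau>)
      has_vector_derivative Im (cw u) * Re D) (at u)"
    unfolding D_def by (rule sint_has_vector_derivative[OF area_integrand_continuous[OF assms]])
  ultimately have "((\<lambda>\<tau>. lift t0 cz cw (s, \<tau>)) has_vector_derivative
      (Re D, 0, Im D, 0, Im (cw u) * Re D)) (at u)"
    unfolding lift_def
    by (auto intro!: has_vector_derivative_Pair has_vector_derivative_Re has_vector_derivative_Im
        derivative_eq_intros)
  then show ?thesis
    unfolding frame_u_def lag_cx_def D_def by (simp add: vector_derivative_at complex_eq_iff)
qed

lemma det_unitary_axes:
  assumes "a \<noteq> 0" and "b \<noteq> 0"
  shows "det_unitary (0, a) (b, 0) = - sgn b * sgn a"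
proof -
  have "Re (cnj z * z) = (cmod z)\<^sup>2" for z
    by (metis complex_norm_square mult.commute Re_complex_of_real)
  then show ?thesis
    using assms unfolding det_unitary_def Let_def cinner_def cscale_def by (simp add: sgn_eq field_simps)
qed

theorem theorem1:
  fixes n :: nat and ms :: "mk list" and czx cwy :: "real \<Rightarrow> complex" and t0 :: real
  assumes "lagrangian_hypercube n ms"
    and "smoothing (map ctr (gzx ms)) czx"
    and "smoothing (map ctr (gwy ms)) cwy"
    and "lagrangian_curve (\<lambda>\<theta>. czx (2 * pi * \<theta>))"
    and "lagrangian_curve (\<lambda>\<theta>. cwy (2 * pi * \<theta>))"
    and "inj_on (lift t0 czx cwy) ({0..<2 * pi} \<times> {0..<2 * pi})"
  shows "rot_class (lift t0 czx cwy) =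
           (complex_of_real (wnum (gzx ms)), complex_of_real (wnum (gwy ms)))"
proof -
  \<comment> \<open>the last three hypotheses only make \<open>L\<close> an embedded Legendrian; the computation does not use them\<close>
  have grids: "grid_diagram n (gzx ms)" "grid_diagram n (gwy ms)"
    using assms(1) by (auto simp: lagrangian_hypercube_def lagrangian_grid_def)
  note zx = smoothing_regular[OF assms(2)] and wy = smoothing_regular[OF assms(3)]
  define f where "f = lift t0 czx cwy"
  define Kzx where "Kzx = - sgn (vector_derivative cwy (at 0))"
  define Kwy where "Kwy = - sgn (vector_derivative czx (at 0))"
  have "Kzx \<noteq> 0" "Kwy \<noteq> 0" using zx(3) wy(3) by (simp_all add: Kzx_def Kwy_def sgn_zero_iff)
  have frames: "frame_s f s u = (0, vector_derivative czx (at s))"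
      "frame_u f s u = (vector_derivative cwy (at u), 0)" for s u
    unfolding f_def using frame_s_lift[OF zx(1,2)] frame_u_lift[OF wy(1,2)] by simp_all
  have "winding_number (\<lambda>\<theta>. det_unitary (frame_s f (2 * pi * \<theta>) 0) (frame_u f (2 * pi * \<theta>) 0)) 0 =
      winding_on (\<lambda>\<theta>. Kzx * sgn (vector_derivative czx (at \<theta>))) 0 (2 * pi)"
    unfolding winding_on_def frames using zx(3) wy(3) by (simp add: det_unitary_axes Kzx_def)
  moreover have "winding_number (\<lambda>\<theta>. det_unitary (frame_s f 0 (2 * pi * \<theta>)) (frame_u f 0 (2 * pi * \<theta>))) 0 =
      winding_on (\<lambda>\<theta>. Kwy * sgn (vector_derivative cwy (at \<theta>))) 0 (2 * pi)"
    unfolding winding_on_def frames using zx(3) wy(3) by (simp add: det_unitary_axes Kwy_def mult.commute)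
  ultimately show ?thesis
    using grid_smoothing_tangent_winding[OF grids(1) assms(2) \<open>Kzx \<noteq> 0\<close>]
      grid_smoothing_tangent_winding[OF grids(2) assms(3) \<open>Kwy \<noteq> 0\<close>]
    by (simp add: rot_class_def f_def)
qed

end
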